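(* Let $(A,\wedge,\vee,0,1)$ be a bounded distributive lattice and $\to$ a binary operation on $A$. Then $(A,\wedge,\vee,\to,0,1)$ is a weak Heyting algebra if and only if $(A,\wedge,\vee,\wedge,\to,1)$ (with the meet also used as the monoidal operation) is a $\mathsf{DLCMI}$. Consequently the variety of weak Heyting algebras can be identified with the subvariety of $\mathsf{DLCMI}$ defined by the equation $x\wedge y\approx x\cdot y$.
   Context: A weak Heyting algebra is an algebra $(A,\wedge,\vee,\to,0,1)$ such that $(A,\wedge,\vee,0,1)$ is a bounded distributive lattice and for all $a,b,c$: $(a\to b)\wedge(a\to c)=a\to(b\wedge c)$; $(a\to c)\wedge(b\to c)=(a\vee b)\to c$; $(a\to b)\wedge(b\to c)\le a\to c$; $a\to a=1$. An algebra $(A,\wedge,\vee,\cdot,\to,1)$ of type $(2,2,2,2,0)$ is a $\mathsf{DLCMI}$ if for all $a,b,c\in A$: (1) $(A,\wedge,\vee)$ is a distributive lattice; (2) $1$ is its largest element; (3) $(A,\cdot,1)$ is a commutative monoid; (4) $(a\to b)\wedge(a\to c)=a\to(b\wedge c)$; (5) $(a\to c)\wedge(b\to c)=(a\vee b)\to c$; (6) $a\to a=1$; (7) $(a\vee b)\cdot c=(a\cdot c)\vee(b\cdot c)$; (8) $(a\to b)\cdot(b\to c)\le a\to c$; (9) $a\to b\le (a\cdot c)\to(b\cdot c)$. *)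

theory Defs
  imports Main
begin

text \<open>Algebras are given by explicit operations on a type (the whole type is the carrier).
  The lattice order is the one induced by the meet: a \<le> b iff a \<and> b = a.\<close>

definition distrib_lattice_ops :: "('a \<Rightarrow> 'a \<Rightarrow> 'a) \<Rightarrow> ('a \<Rightarrow> 'a \<Rightarrow> 'a) \<Rightarrow> bool" where
  "distrib_lattice_ops mt jn \<longleftrightarrow>
     (\<forall>a b. mt a b = mt b a) \<and> (\<forall>a b. jn a b = jn b a) \<and>
     (\<forall>a b c. mt (mt a b) c = mt a (mt b c)) \<and> (\<forall>a b c. jn (jn a b) c = jn a (jn b c)) \<and>
     (\<forall>a b. mt a (jn a b) = a) \<and> (\<forall>a b. jn a (mt a b) = a) \<and>
     (\<forall>a b c. mt a (jn b c) = jn (mt a b) (mt a c))"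

definition lat_le :: "('a \<Rightarrow> 'a \<Rightarrow> 'a) \<Rightarrow> 'a \<Rightarrow> 'a \<Rightarrow> bool" where
  "lat_le mt a b \<longleftrightarrow> mt a b = a"

definition weak_heyting_algebra ::
  "('a \<Rightarrow> 'a \<Rightarrow> 'a) \<Rightarrow> ('a \<Rightarrow> 'a \<Rightarrow> 'a) \<Rightarrow> ('a \<Rightarrow> 'a \<Rightarrow> 'a) \<Rightarrow> 'a \<Rightarrow> 'a \<Rightarrow> bool" where
  "weak_heyting_algebra mt jn imp zero one \<longleftrightarrow>
     distrib_lattice_ops mt jn \<and>
     (\<forall>a. lat_le mt zero a) \<and> (\<forall>a. lat_le mt a one) \<and>
     (\<forall>a b c. mt (imp a b) (imp a c) = imp a (mt b c)) \<and>
     (\<forall>a b c. mt (imp a c) (imp b c) = imp (jn a b) c) \<and>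
     (\<forall>a b c. lat_le mt (mt (imp a b) (imp b c)) (imp a c)) \<and>
     (\<forall>a. imp a a = one)"

definition dlcmi ::
  "('a \<Rightarrow> 'a \<Rightarrow> 'a) \<Rightarrow> ('a \<Rightarrow> 'a \<Rightarrow> 'a) \<Rightarrow> ('a \<Rightarrow> 'a \<Rightarrow> 'a) \<Rightarrow> ('a \<Rightarrow> 'a \<Rightarrow> 'a) \<Rightarrow> 'a \<Rightarrow> bool" where
  "dlcmi mt jn dot imp one \<longleftrightarrow>
     distrib_lattice_ops mt jn \<and>
     (\<forall>a. lat_le mt a one) \<and>
     (\<forall>a b c. dot (dot a b) c = dot a (dot b c)) \<and> (\<forall>a b. dot a b = dot b a) \<and>
     (\<forall>a. dot a one = a) \<and>
     (\<forall>a b c. mt (imp a b) (imp a c) = imp a (mt b c)) \<and>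
     (\<forall>a b c. mt (imp a c) (imp b c) = imp (jn a b) c) \<and>
     (\<forall>a. imp a a = one) \<and>
     (\<forall>a b c. dot (jn a b) c = jn (dot a c) (dot b c)) \<and>
     (\<forall>a b c. lat_le mt (dot (imp a b) (imp b c)) (imp a c)) \<and>
     (\<forall>a b c. lat_le mt (imp a b) (imp (dot a c) (dot b c)))"

end

theory Submission
  imports Defs
begin

text \<open>With the meet as monoid operation, every DLCMI axiom except (9),
  \<open>a \<rightarrow> b \<le> (a \<and> c) \<rightarrow> (b \<and> c)\<close>, is a weak Heyting axiom or a lattice law, and conversely.
  Axiom (9) holds in a weak Heyting algebra because (5) and (6) make \<open>\<rightarrow>\<close> equal to \<open>1\<close> on
  comparable pairs; so \<open>a \<rightarrow> b = ((a \<and> c) \<rightarrow> a) \<and> (a \<rightarrow> b) \<le> (a \<and> c) \<rightarrow> b\<close> by (8), and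
  \<open>(a \<and> c) \<rightarrow> b = ((a \<and> c) \<rightarrow> b) \<and> ((a \<and> c) \<rightarrow> c) = (a \<and> c) \<rightarrow> (b \<and> c)\<close> by (4).\<close>

lemma distrib_lattice_ops_inf_sup: "distrib_lattice_ops (inf :: 'a::distrib_lattice \<Rightarrow> _) sup"
  by (simp add: distrib_lattice_ops_def inf_sup_distrib1 ac_simps)

lemma lat_le_inf_iff:
  fixes a b :: "'a::semilattice_inf"
  shows "lat_le inf a b \<longleftrightarrow> a \<le> b"
  by (simp add: lat_le_def inf.absorb_iff1)

lemma imp_eq_top_if_le:
  fixes imp :: "'a::bounded_lattice_top \<Rightarrow> 'a \<Rightarrow> 'a"
  assumes imp_sup: "\<And>a b c. inf (imp a c) (imp b c) = imp (sup a b) c"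
    and imp_refl: "\<And>a. imp a a = top"
    and "a \<le> b"
  shows "imp a b = top"
proof -
  have "top = imp (sup a b) b"
    using \<open>a \<le> b\<close> by (simp add: sup_absorb2 imp_refl)
  also have "\<dots> = inf (imp a b) top"
    by (simp flip: imp_sup add: imp_refl)
  finally show ?thesis
    by (simp add: top_unique)
qed

lemma imp_le_imp_inf_inf:
  fixes imp :: "'a::bounded_lattice_top \<Rightarrow> 'a \<Rightarrow> 'a"
  assumes imp_inf: "\<And>a b c. inf (imp a b) (imp a c) = imp a (inf b c)"
    and imp_sup: "\<And>a b c. inf (imp a c) (imp b c) = imp (sup a b) c"
    and imp_refl: "\<And>a. imp a a = top"
    and imp_trans: "\<And>a b c. inf (imp a b) (imp b c) \<le> imp a c"
  shows "imp a b \<le> imp (inf a c) (inf b c)"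
proof -
  have top_if_le: "x \<le> y \<Longrightarrow> imp x y = top" for x y
    using imp_sup imp_refl by (rule imp_eq_top_if_le)
  have "imp a b = inf (imp (inf a c) a) (imp a b)"
    by (simp add: top_if_le)
  also have "\<dots> \<le> imp (inf a c) b"
    by (rule imp_trans)
  also have "\<dots> = inf (imp (inf a c) b) (imp (inf a c) c)"
    by (simp add: top_if_le)
  also have "\<dots> = imp (inf a c) (inf b c)"
    by (rule imp_inf)
  finally show ?thesis .
qed

theorem lemma2p5:
  fixes imp :: "'a::{distrib_lattice, bounded_lattice} \<Rightarrow> 'a \<Rightarrow> 'a"
  shows "weak_heyting_algebra inf sup imp bot top \<longleftrightarrow> dlcmi inf sup inf imp top"
proof
  assume "weak_heyting_algebra inf sup imp bot top"
  then have imp_inf: "\<And>a b c. inf (imp a b) (imp a c) = imp a (inf b c)"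
    and imp_sup: "\<And>a b c. inf (imp a c) (imp b c) = imp (sup a b) c"
    and imp_refl: "\<And>a. imp a a = top"
    and imp_trans: "\<And>a b c. inf (imp a b) (imp b c) \<le> imp a c"
    by (simp_all add: weak_heyting_algebra_def lat_le_inf_iff)
  have "imp a b \<le> imp (inf a c) (inf b c)" for a b c
    using imp_inf imp_sup imp_refl imp_trans by (rule imp_le_imp_inf_inf)
  with imp_inf imp_sup imp_refl imp_trans show "dlcmi inf sup inf imp top"
    by (simp add: dlcmi_def lat_le_inf_iff distrib_lattice_ops_inf_sup inf_sup_distrib1 ac_simps)
next
  assume "dlcmi inf sup inf imp top"
  then show "weak_heyting_algebra inf sup imp bot top"
    by (simp add: dlcmi_def weak_heyting_algebra_def lat_le_inf_iff)
qed

end
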